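(* Let $(X,\|\cdot\|)$ be an extended Banach space and let $\tau_F$ be its finest locally convex topology. Then $(X,\tau_F)$ is barreled, i.e. every absolutely convex, absorbing subset of $X$ that is closed in $(X,\tau_F)$ is a neighborhood of $0_X$ in $(X,\tau_F)$.
   Context: An extended norm on a vector space $X$ over $\mathbb{R}$ or $\mathbb{C}$ is a map $\|\cdot\|:X\to[0,\infty]$ with $\|x\|=0$ iff $x=0_X$, $\|\alpha x\|=|\alpha|\|x\|$, and $\|x+y\|\le\|x\|+\|y\|$; $X$ carries the topology with basic neighborhoods $\{y:\|y-x\|<\varepsilon\}$. $(X,\|\cdot\|)$ is an extended Banach space if every Cauchy sequence (w.r.t. the extended metric $\|x-y\|$) converges. A locally convex topology on $X$ is one induced by a family of finite-valued seminorms. The finest locally convex topology $\tau_F$ is the locally convex topology coarser than the extended norm topology such that every locally convex topology coarser than the extended norm topology is coarser than $\tau_F$. *)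

theory Defs
  imports "HOL-Analysis.Analysis"
begin

text \<open>Everything is parameterised by the scalar multiplication \<open>sc\<close> of a vector space
  over a scalar field \<open>'k\<close> (instantiated with \<open>scaleR\<close> for real and \<open>scaleC\<close> for
  complex vector spaces); \<open>norm\<close> on \<open>'k\<close> is the absolute value.\<close>

definition ext_norm :: "('k::real_normed_field \<Rightarrow> 'v::ab_group_add \<Rightarrow> 'v) \<Rightarrow> ('v \<Rightarrow> ennreal) \<Rightarrow> bool" where
  "ext_norm sc N \<longleftrightarrow>
     (\<forall>x. N x = 0 \<longleftrightarrow> x = 0) \<and>
     (\<forall>a x. N (sc a x) = ennreal (norm a) * N x) \<and>
     (\<forall>x y. N (x + y) \<le> N x + N y)"

definition ext_norm_topology :: "('v::ab_group_add \<Rightarrow> ennreal) \<Rightarrow> 'v topology" where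
  "ext_norm_topology N =
     topology (\<lambda>U. \<forall>x\<in>U. \<exists>e::real. e > 0 \<and> {y. N (y - x) < ennreal e} \<subseteq> U)"

definition ext_banach :: "('k::real_normed_field \<Rightarrow> 'v::ab_group_add \<Rightarrow> 'v) \<Rightarrow> ('v \<Rightarrow> ennreal) \<Rightarrow> bool" where
  "ext_banach sc N \<longleftrightarrow> ext_norm sc N \<and>
     (\<forall>s::nat \<Rightarrow> 'v.
        (\<forall>e::real. e > 0 \<longrightarrow> (\<exists>M. \<forall>m\<ge>M. \<forall>n\<ge>M. N (s m - s n) < ennreal e)) \<longrightarrow>
        (\<exists>x. \<forall>e::real. e > 0 \<longrightarrow> (\<exists>M. \<forall>n\<ge>M. N (s n - x) < ennreal e)))"

definition seminorm_on :: "('k::real_normed_field \<Rightarrow> 'v::ab_group_add \<Rightarrow> 'v) \<Rightarrow> ('v \<Rightarrow> real) \<Rightarrow> bool" where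
  "seminorm_on sc p \<longleftrightarrow>
     (\<forall>x. p x \<ge> 0) \<and> (\<forall>a x. p (sc a x) = norm a * p x) \<and> (\<forall>x y. p (x + y) \<le> p x + p y)"

definition seminorm_topology :: "('v::ab_group_add \<Rightarrow> real) set \<Rightarrow> 'v topology" where
  "seminorm_topology P =
     topology (\<lambda>U. \<forall>x\<in>U. \<exists>F e. finite F \<and> F \<subseteq> P \<and> e > 0 \<and>
                          {y. \<forall>p\<in>F. p (y - x) < e} \<subseteq> U)"

definition locally_convex_topology :: "('k::real_normed_field \<Rightarrow> 'v::ab_group_add \<Rightarrow> 'v) \<Rightarrow> 'v topology \<Rightarrow> bool" where
  "locally_convex_topology sc T \<longleftrightarrow>
     (\<exists>P. (\<forall>p\<in>P. seminorm_on sc p) \<and> T = seminorm_topology P)"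

definition coarser :: "'a topology \<Rightarrow> 'a topology \<Rightarrow> bool" where
  "coarser T1 T2 \<longleftrightarrow> (\<forall>U. openin T1 U \<longrightarrow> openin T2 U)"

definition finest_lc_topology :: "('k::real_normed_field \<Rightarrow> 'v::ab_group_add \<Rightarrow> 'v) \<Rightarrow> ('v \<Rightarrow> ennreal) \<Rightarrow> 'v topology \<Rightarrow> bool" where
  "finest_lc_topology sc N T \<longleftrightarrow>
     locally_convex_topology sc T \<and> coarser T (ext_norm_topology N) \<and>
     (\<forall>T'. locally_convex_topology sc T' \<and> coarser T' (ext_norm_topology N) \<longrightarrow> coarser T' T)"

definition absolutely_convex :: "('k::real_normed_field \<Rightarrow> 'v::ab_group_add \<Rightarrow> 'v) \<Rightarrow> 'v set \<Rightarrow> bool" where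
  "absolutely_convex sc B \<longleftrightarrow>
     (\<forall>x\<in>B. \<forall>y\<in>B. \<forall>a b. norm a + norm b \<le> 1 \<longrightarrow> sc a x + sc b y \<in> B)"

definition absorbing :: "('k::real_normed_field \<Rightarrow> 'v::ab_group_add \<Rightarrow> 'v) \<Rightarrow> 'v set \<Rightarrow> bool" where
  "absorbing sc B \<longleftrightarrow> (\<forall>x. \<exists>r::real. r > 0 \<and> (\<forall>a. r \<le> norm a \<longrightarrow> x \<in> sc a ` B))"

definition barreled :: "('k::real_normed_field \<Rightarrow> 'v::ab_group_add \<Rightarrow> 'v) \<Rightarrow> 'v topology \<Rightarrow> bool" where
  "barreled sc T \<longleftrightarrow>
     (\<forall>B. absolutely_convex sc B \<and> absorbing sc B \<and> closedin T B \<longrightarrow>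
          (\<exists>U. openin T U \<and> 0 \<in> U \<and> U \<subseteq> B))"

end

theory Submission
  imports Defs
begin

(* A barrel B that is closed for the finest locally convex topology is also closed for the
  extended norm topology, which is completely metrizable by the distance min 1 \<parallel>x - y\<parallel>.
  Since B is absorbing, the closed sets (n + 1) B cover X, so by Baire's theorem one of them
  contains a ball; as B is absolutely convex, B then contains a ball around 0. Hence the
  Minkowski functional of B is a seminorm bounded on a ball, so the topology it generates is
  locally convex and coarser than the norm topology, thus coarser than the finest one, and its
  open unit ball is a neighbourhood of 0 inside B. *)

lemma istopology_neighbourhood_base:
  assumes "\<And>x i j. P i \<Longrightarrow> P j \<Longrightarrow> \<exists>k. P k \<and> nbhd x k \<subseteq> nbhd x i \<inter> nbhd x j"
  shows "istopology (\<lambda>S. \<forall>x\<in>S. \<exists>i. P i \<and> nbhd x i \<subseteq> S)"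
  unfolding istopology_def
proof (intro conjI allI impI)
  fix S T assume S: "\<forall>x\<in>S. \<exists>i. P i \<and> nbhd x i \<subseteq> S" and T: "\<forall>x\<in>T. \<exists>i. P i \<and> nbhd x i \<subseteq> T"
  show "\<forall>x\<in>S \<inter> T. \<exists>k. P k \<and> nbhd x k \<subseteq> S \<inter> T"
  proof
    fix x assume x: "x \<in> S \<inter> T"
    obtain i where i: "P i" "nbhd x i \<subseteq> S" using S x by blast
    obtain j where j: "P j" "nbhd x j \<subseteq> T" using T x by blast
    obtain k where "P k" "nbhd x k \<subseteq> nbhd x i \<inter> nbhd x j" using assms[OF i(1) j(1)] by blast
    with i(2) j(2) show "\<exists>k. P k \<and> nbhd x k \<subseteq> S \<inter> T" by blast
  qed
next
  fix \<K> assume "\<forall>S\<in>\<K>. \<forall>x\<in>S. \<exists>i. P i \<and> nbhd x i \<subseteq> S"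
  then show "\<forall>x\<in>\<Union>\<K>. \<exists>i. P i \<and> nbhd x i \<subseteq> \<Union>\<K>" by (meson Union_iff Union_upper order_trans)
qed

lemma openin_ext_norm_topology:
  "openin (ext_norm_topology N) U \<longleftrightarrow> (\<forall>x\<in>U. \<exists>e::real. e > 0 \<and> {y. N (y - x) < ennreal e} \<subseteq> U)"
proof -
  have "istopology (\<lambda>S. \<forall>x\<in>S. \<exists>e::real. e > 0 \<and> {y. N (y - x) < ennreal e} \<subseteq> S)"
  proof (rule istopology_neighbourhood_base)
    fix x and e1 e2 :: real assume "e1 > 0" "e2 > 0"
    then show "\<exists>e>0. {y. N (y - x) < ennreal e} \<subseteq> {y. N (y - x) < ennreal e1} \<inter> {y. N (y - x) < ennreal e2}"
      by (intro exI[of _ "min e1 e2"]) (auto simp flip: min_ennreal)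
  qed
  then show ?thesis unfolding ext_norm_topology_def by (simp add: topology_inverse')
qed

lemma openin_seminorm_topology:
  "openin (seminorm_topology P) U \<longleftrightarrow>
     (\<forall>x\<in>U. \<exists>F e. finite F \<and> F \<subseteq> P \<and> e > 0 \<and> {y. \<forall>p\<in>F. p (y - x) < e} \<subseteq> U)"
proof -
  have "istopology (\<lambda>S. \<forall>x\<in>S. \<exists>i. (\<lambda>(F, e). finite F \<and> F \<subseteq> P \<and> e > 0) i \<and>
                           (\<lambda>(F, e). {y. \<forall>p\<in>F. p (y - x) < e}) i \<subseteq> S)"
  proof (rule istopology_neighbourhood_base, clarify)
    fix x F1 F2 and e1 e2 :: real
    assume "finite F1" "F1 \<subseteq> P" "e1 > 0" "finite F2" "F2 \<subseteq> P" "e2 > 0"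
    then show "\<exists>k. (\<lambda>(F, e). finite F \<and> F \<subseteq> P \<and> e > 0) k \<and> (\<lambda>(F, e). {y. \<forall>p\<in>F. p (y - x) < e}) k
        \<subseteq> {y. \<forall>p\<in>F1. p (y - x) < e1} \<inter> {y. \<forall>p\<in>F2. p (y - x) < e2}"
      by (intro exI[of _ "(F1 \<union> F2, min e1 e2)"]) auto
  qed
  then show ?thesis unfolding seminorm_topology_def by (simp add: topology_inverse' split_paired_Ex conj_assoc)
qed

lemma topspace_ext_norm_topology [simp]: "topspace (ext_norm_topology N) = UNIV"
proof -
  have "openin (ext_norm_topology N) UNIV"
    unfolding openin_ext_norm_topology by (intro ballI exI[of _ "1::real"]) auto
  then show ?thesis using openin_subset by blast
qed

lemma topspace_seminorm_topology [simp]: "topspace (seminorm_topology P) = UNIV"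
proof -
  have "openin (seminorm_topology P) UNIV"
    unfolding openin_seminorm_topology by (intro ballI exI[of _ "{}"] exI[of _ "1::real"]) auto
  then show ?thesis using openin_subset by blast
qed

lemma openin_seminorm_topology_unit_ball:
  assumes "seminorm_on sc p" "p \<in> P"
  shows "openin (seminorm_topology P) {x. p x < 1}"
  unfolding openin_seminorm_topology
proof (intro ballI exI conjI)
  fix x assume x: "x \<in> {x. p x < 1}"
  show "finite {p}" "{p} \<subseteq> P" using assms(2) by auto
  show "1 - p x > 0" using x by simp
  show "{y. \<forall>q\<in>{p}. q (y - x) < 1 - p x} \<subseteq> {x. p x < 1}"
  proof
    fix y assume "y \<in> {y. \<forall>q\<in>{p}. q (y - x) < 1 - p x}"
    moreover have "p y \<le> p (y - x) + p x"
      using assms(1) unfolding seminorm_on_def by (metis diff_add_cancel)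
    ultimately show "y \<in> {x. p x < 1}" by simp
  qed
qed

lemma closedin_coarser:
  assumes "coarser T1 T2" "topspace T1 = topspace T2" "closedin T1 B"
  shows "closedin T2 B"
  using assms(3) assms(1)[unfolded coarser_def, rule_format, of "topspace T1 - B"]
  unfolding closedin_def assms(2) by simp

definition minkowski_functional :: "('k::real_normed_field \<Rightarrow> 'v \<Rightarrow> 'v) \<Rightarrow> 'v set \<Rightarrow> 'v \<Rightarrow> real" where
  "minkowski_functional sc B x = Inf {t. t > 0 \<and> x \<in> sc (of_real t) ` B}"

locale vector_space_over_normed_field =
  vector_space scale for scale :: "'k::real_normed_field \<Rightarrow> 'v::ab_group_add \<Rightarrow> 'v"
begin

lemma absolutely_convex_scale_mem:
  assumes "absolutely_convex scale B" "b \<in> B" "norm u \<le> 1"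
  shows "scale u b \<in> B"
  using assms unfolding absolutely_convex_def by (metis add.right_neutral norm_zero scale_zero_left)

lemma absolutely_convex_scale_image:
  assumes "absolutely_convex scale B" "x \<in> scale (of_real t) ` B"
  shows "scale a x \<in> scale (of_real (norm a * t)) ` B"
proof -
  obtain b where b: "b \<in> B" "x = scale (of_real t) b" using assms(2) by blast
  define u where "u = a / of_real (norm a)"
  have "norm u \<le> 1" unfolding u_def by (simp add: norm_divide)
  then have "scale u b \<in> B" using absolutely_convex_scale_mem assms(1) b(1) by blast
  moreover have "of_real (norm a * t) * u = a * of_real t"
    unfolding u_def by (cases "a = 0") (simp_all add: field_simps)
  ultimately show ?thesis using b(2) by (metis image_eqI scale_scale)
qed

lemma absolutely_convex_add_mem_image:
  assumes "absolutely_convex scale B" "s > 0" "t > 0"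
    and "x \<in> scale (of_real s) ` B" "y \<in> scale (of_real t) ` B"
  shows "x + y \<in> scale (of_real (s + t)) ` B"
proof -
  obtain b1 b2 where b: "b1 \<in> B" "x = scale (of_real s) b1" "b2 \<in> B" "y = scale (of_real t) b2"
    using assms(4,5) by blast
  define b where "b = scale (of_real (s / (s + t))) b1 + scale (of_real (t / (s + t))) b2"
  have "norm (of_real (s / (s + t)) :: 'k) + norm (of_real (t / (s + t)) :: 'k) \<le> 1"
    unfolding norm_of_real using assms(2,3) by (simp add: field_simps)
  then have "b \<in> B" using assms(1) b unfolding absolutely_convex_def b_def by blast
  moreover have "of_real s + of_real t \<noteq> (0::'k)"
    using assms(2,3) by (metis add_pos_pos of_real_add of_real_eq_0_iff order_less_irrefl)
  then have "scale (of_real (s + t)) b = x + y"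
    using b(2,4) by (simp add: b_def scale_right_distrib flip: of_real_mult)
  ultimately show ?thesis by (metis image_eqI)
qed

lemma absolutely_convex_scale_preimage:
  assumes "absolutely_convex scale B"
  shows "absolutely_convex scale {x. scale c x \<in> B}"
  unfolding absolutely_convex_def
proof (intro ballI allI impI)
  fix x y and a b :: 'k assume "x \<in> {x. scale c x \<in> B}" "y \<in> {x. scale c x \<in> B}" "norm a + norm b \<le> 1"
  then have "scale a (scale c x) + scale b (scale c y) \<in> B"
    using assms unfolding absolutely_convex_def by blast
  moreover have "scale c (scale a x + scale b y) = scale a (scale c x) + scale b (scale c y)"
    by (simp add: scale_right_distrib mult.commute)
  ultimately show "scale a x + scale b y \<in> {x. scale c x \<in> B}" by simp
qed

lemma absorbing_covers:
  assumes "absorbing scale B"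
  shows "(\<Union>n. {x. scale (inverse (of_nat (Suc n))) x \<in> B}) = UNIV"
proof -
  have "\<exists>n. scale (inverse (of_nat (Suc n))) x \<in> B" for x
  proof -
    obtain r where r: "\<forall>a. r \<le> norm a \<longrightarrow> x \<in> scale a ` B"
      using assms unfolding absorbing_def by blast
    obtain n where "r \<le> real (Suc n)" by (meson le_SucI of_nat_le_iff real_arch_simple order_trans)
    then obtain b where "b \<in> B" "x = scale (of_nat (Suc n)) b" using r by (metis norm_of_nat imageE)
    moreover have "(of_nat (Suc n) :: 'k) \<noteq> 0" by (simp only: of_nat_eq_0_iff)
    ultimately show ?thesis by (intro exI[of _ n]) simp
  qed
  then show ?thesis by auto
qed

context
  fixes B assumes convex: "absolutely_convex scale B" and absorbing: "absorbing scale B"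
begin

lemma absorbing_scaled_mem: "\<exists>t>0. x \<in> scale (of_real t) ` B"
proof -
  obtain r :: real where "r > 0" "\<forall>a. r \<le> norm a \<longrightarrow> x \<in> scale a ` B"
    using absorbing unfolding absorbing_def by blast
  then show ?thesis by (intro exI[of _ r]) simp
qed

lemma zero_mem_absorbing: "0 \<in> B"
  using absorbing_scaled_mem[of 0] absolutely_convex_scale_mem[OF convex, of _ 0] by auto

lemma minkowski_functional_nonneg: "minkowski_functional scale B x \<ge> 0"
  unfolding minkowski_functional_def using absorbing_scaled_mem[of x] by (intro cInf_greatest) auto

lemma minkowski_functional_le: "t > 0 \<Longrightarrow> x \<in> scale (of_real t) ` B \<Longrightarrow> minkowski_functional scale B x \<le> t"
  unfolding minkowski_functional_def by (rule cInf_lower) (auto intro: bdd_belowI[of _ 0])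

lemma minkowski_functional_le_1: "x \<in> B \<Longrightarrow> minkowski_functional scale B x \<le> 1"
  using minkowski_functional_le[of 1 x] by simp

lemma minkowski_functional_lessE:
  assumes "minkowski_functional scale B x < c"
  obtains t where "t > 0" "t < c" "x \<in> scale (of_real t) ` B"
  using cInf_lessD[OF _ assms[unfolded minkowski_functional_def]] absorbing_scaled_mem[of x] that by blast

lemma mem_of_minkowski_functional_less_1: "minkowski_functional scale B x < 1 \<Longrightarrow> x \<in> B"
  by (erule minkowski_functional_lessE) (auto intro: absolutely_convex_scale_mem[OF convex])

lemma minkowski_functional_zero: "minkowski_functional scale B 0 = 0"
proof -
  have "minkowski_functional scale B 0 \<le> 0 + t" if "t > 0" for t
    using that zero_mem_absorbing by (intro minkowski_functional_le) (auto intro!: image_eqI[of _ _ 0])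
  then show ?thesis using field_le_epsilon minkowski_functional_nonneg by (metis order_antisym)
qed

lemma minkowski_functional_scale_le:
  assumes "a \<noteq> 0"
  shows "minkowski_functional scale B (scale a x) \<le> norm a * minkowski_functional scale B x"
proof -
  have "minkowski_functional scale B (scale a x) / norm a \<le> t"
    if "t > 0" "x \<in> scale (of_real t) ` B" for t
    using minkowski_functional_le[OF _ absolutely_convex_scale_image[OF convex that(2)], of a] assms that
    by (simp add: field_simps)
  then have "minkowski_functional scale B (scale a x) / norm a \<le> minkowski_functional scale B x"
    unfolding minkowski_functional_def[of _ _ x] using absorbing_scaled_mem[of x]
    by (intro cInf_greatest) auto
  then show ?thesis using assms by (simp add: field_simps)
qed

lemma minkowski_functional_scale:
  "minkowski_functional scale B (scale a x) = norm a * minkowski_functional scale B x"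
proof (cases "a = 0")
  case True
  then show ?thesis by (simp add: minkowski_functional_zero)
next
  case False
  have "minkowski_functional scale B x \<le> norm (inverse a) * minkowski_functional scale B (scale a x)"
    using minkowski_functional_scale_le[of "inverse a" "scale a x"] False by simp
  then have "norm a * minkowski_functional scale B x
      \<le> norm a * (norm (inverse a) * minkowski_functional scale B (scale a x))"
    by (rule mult_left_mono) simp
  also have "\<dots> = minkowski_functional scale B (scale a x)"
    using False by (simp add: norm_inverse)
  finally show ?thesis using minkowski_functional_scale_le[OF False, of x] by simp
qed

lemma minkowski_functional_triangle:
  "minkowski_functional scale B (x + y) \<le> minkowski_functional scale B x + minkowski_functional scale B y"
proof (rule field_le_epsilon)
  fix e :: real assume "e > 0"
  have "minkowski_functional scale B x < minkowski_functional scale B x + e / 2" using \<open>e > 0\<close> by simp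
  then obtain s where s: "s > 0" "s < minkowski_functional scale B x + e / 2" "x \<in> scale (of_real s) ` B"
    by (rule minkowski_functional_lessE)
  have "minkowski_functional scale B y < minkowski_functional scale B y + e / 2" using \<open>e > 0\<close> by simp
  then obtain t where t: "t > 0" "t < minkowski_functional scale B y + e / 2" "y \<in> scale (of_real t) ` B"
    by (rule minkowski_functional_lessE)
  have "minkowski_functional scale B (x + y) \<le> s + t"
    using s t by (intro minkowski_functional_le absolutely_convex_add_mem_image[OF convex]) auto
  with s t show "minkowski_functional scale B (x + y) \<le> minkowski_functional scale B x + minkowski_functional scale B y + e"
    by linarith
qed

lemma seminorm_on_minkowski_functional: "seminorm_on scale (minkowski_functional scale B)"
  unfolding seminorm_on_def
  using minkowski_functional_nonneg minkowski_functional_scale minkowski_functional_triangle by blast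

end

end

locale ext_normed_space =
  vector_space_over_normed_field scale for scale :: "'k::real_normed_field \<Rightarrow> 'v::ab_group_add \<Rightarrow> 'v" +
  fixes N :: "'v \<Rightarrow> ennreal"
  assumes ext_norm: "ext_norm scale N"
begin

lemma ext_norm_eq_0_iff [simp]: "N x = 0 \<longleftrightarrow> x = 0"
  and ext_norm_scale: "N (scale a x) = ennreal (norm a) * N x"
  and ext_norm_triangle: "N (x + y) \<le> N x + N y"
  using ext_norm unfolding ext_norm_def by auto

lemma ext_norm_zero [simp]: "N 0 = 0"
  by simp

lemma ext_norm_minus [simp]: "N (- x) = N x"
  using ext_norm_scale[of "-1" x] by (simp add: scale_minus_left)

lemma ext_norm_commute: "N (x - y) = N (y - x)"
  using ext_norm_minus[of "x - y"] by simp

lemma ext_norm_scale_less_iff: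
  assumes "a \<noteq> 0"
  shows "N (scale a x) < ennreal (norm a * e) \<longleftrightarrow> N x < ennreal e"
proof -
  have "ennreal (norm a) \<noteq> 0" "ennreal (norm a) \<noteq> top" using assms by simp_all
  from ennreal_mult_le_mult_iff[OF this, of "ennreal e" "N x"]
  have "ennreal (norm a) * N x < ennreal (norm a) * ennreal e \<longleftrightarrow> N x < ennreal e"
    by (simp only: not_le[symmetric])
  then show ?thesis unfolding ext_norm_scale ennreal_mult'[OF norm_ge_zero] .
qed

text \<open>Truncating at 1 makes the extended metric finite without changing small balls, so neither
  the topology nor the Cauchy sequences change.\<close>
definition ext_norm_dist :: "'v \<Rightarrow> 'v \<Rightarrow> real" where
  "ext_norm_dist x y = enn2real (min 1 (N (x - y)))"

lemma ext_norm_dist_less_iff: "ext_norm_dist x y < e \<longleftrightarrow> min 1 (N (x - y)) < ennreal e"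
  unfolding ext_norm_dist_def by (rule enn2real_less_iff) (simp add: min.strict_coboundedI1)

lemma ext_norm_dist_less: "N (x - y) < ennreal e \<Longrightarrow> ext_norm_dist x y < e"
  by (simp add: ext_norm_dist_less_iff min.strict_coboundedI2)

lemma ext_norm_dist_less_iff_small:
  assumes "e \<le> 1"
  shows "ext_norm_dist x y < e \<longleftrightarrow> N (x - y) < ennreal e"
proof -
  have "\<not> 1 < ennreal e" using assms by (simp add: not_less ennreal_le_1)
  then show ?thesis unfolding ext_norm_dist_less_iff min_less_iff_disj by simp
qed

sublocale capped: Metric_space UNIV ext_norm_dist
proof
  fix x y z
  show "0 \<le> ext_norm_dist x y" by (simp add: ext_norm_dist_def)
  show "ext_norm_dist x y = ext_norm_dist y x" by (simp add: ext_norm_dist_def ext_norm_commute)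
  have "min 1 (N (x - y)) < top" by (simp add: min.strict_coboundedI1)
  moreover have "min 1 (N (x - y)) = 0 \<longleftrightarrow> x = y" by (auto simp: min_def)
  ultimately show "ext_norm_dist x y = 0 \<longleftrightarrow> x = y"
    unfolding ext_norm_dist_def enn2real_eq_0_iff by force
  have "N (x - z) \<le> N (x - y) + N (y - z)" using ext_norm_triangle[of "x - y" "y - z"] by simp
  then have "min 1 (N (x - z)) \<le> min 1 (N (x - y)) + min 1 (N (y - z))"
    by (simp add: add.commute add_increasing2 leI min_def)
  moreover have "min 1 (N (x - y)) < top" "min 1 (N (y - z)) < top"
    by (simp_all add: min.strict_coboundedI1)
  ultimately show "ext_norm_dist x z \<le> ext_norm_dist x y + ext_norm_dist y z"
    unfolding ext_norm_dist_def by (metis enn2real_mono enn2real_plus ennreal_add_less_top)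
qed

lemma mball_ext_norm_dist:
  assumes "r \<le> 1"
  shows "capped.mball x r = {y. N (y - x) < ennreal r}"
  using ext_norm_dist_less_iff_small[OF assms] by (auto simp: ext_norm_commute)

lemma mtopology_ext_norm_dist: "capped.mtopology = ext_norm_topology N"
proof -
  have "(\<exists>r>0. capped.mball x r \<subseteq> U) \<longleftrightarrow> (\<exists>e>0. {y. N (y - x) < ennreal e} \<subseteq> U)" for x U
  proof
    assume "\<exists>r>0. capped.mball x r \<subseteq> U"
    then obtain r where "r > 0" "capped.mball x (min r 1) \<subseteq> U"
      by (meson capped.mball_subset_concentric min.cobounded1 order_trans)
    then show "\<exists>e>0. {y. N (y - x) < ennreal e} \<subseteq> U"
      by (intro exI[of _ "min r 1"]) (simp add: mball_ext_norm_dist)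
  next
    assume "\<exists>e>0. {y. N (y - x) < ennreal e} \<subseteq> U"
    then obtain e where "e > 0" "{y. N (y - x) < ennreal e} \<subseteq> U" by blast
    moreover have "{y. N (y - x) < ennreal (min e 1)} \<subseteq> {y. N (y - x) < ennreal e}"
      using ennreal_leI[OF min.cobounded1[of e 1]] by (auto dest: order.strict_trans2)
    ultimately show "\<exists>r>0. capped.mball x r \<subseteq> U"
      by (intro exI[of _ "min e 1"]) (auto simp: mball_ext_norm_dist)
  qed
  then show ?thesis
    unfolding topology_eq capped.openin_mtopology openin_ext_norm_topology by blast
qed

lemma continuous_map_scale: "continuous_map (ext_norm_topology N) (ext_norm_topology N) (scale c)"
proof (cases "c = 0")
  case True
  then have "scale c = (\<lambda>_. 0)" by auto
  then show ?thesis by simp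
next
  case False
  have "\<exists>e'>0. {y. N (y - x) < ennreal e'} \<subseteq> {x. scale c x \<in> U}"
    if "e > 0" "{y. N (y - scale c x) < ennreal e} \<subseteq> U" for x U e
  proof (intro exI conjI subsetI CollectI)
    show "e / norm c > 0" using False that(1) by simp
    fix y assume "y \<in> {y. N (y - x) < ennreal (e / norm c)}"
    then have "N (scale c (y - x)) < ennreal e"
      using ext_norm_scale_less_iff[OF False, of "y - x" "e / norm c"] False by simp
    then show "scale c y \<in> U" using that(2) by (auto simp: scale_right_diff_distrib)
  qed
  then show ?thesis
    unfolding continuous_map openin_ext_norm_topology topspace_ext_norm_topology
    by (simp add: Ball_def) meson
qed

lemma seminorm_le_if_ext_norm_less:
  assumes "seminorm_on scale p" "\<forall>y. N y < ennreal r \<longrightarrow> p y \<le> 1" "t > 0" "N z < ennreal (t * r)"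
  shows "p z \<le> t"
proof -
  let ?a = "of_real t :: 'k"
  have a: "?a \<noteq> 0" "norm ?a = t" using assms(3) by auto
  define w where "w = scale (inverse ?a) z"
  have z: "z = scale ?a w" using a(1) by (simp add: w_def)
  have "N w < ennreal r" using assms(4) ext_norm_scale_less_iff[OF a(1), of w r] a(2) z by simp
  then have "p w \<le> 1" using assms(2) by blast
  moreover have "p z = t * p w" using assms(1) a(2) z unfolding seminorm_on_def by simp
  ultimately show ?thesis using assms(3) by (simp add: mult_le_cancel_left1)
qed

lemma coarser_seminorm_topology_ext_norm_topology:
  assumes "seminorm_on scale p" "r > 0" "\<forall>y. N y < ennreal r \<longrightarrow> p y \<le> 1"
  shows "coarser (seminorm_topology {p}) (ext_norm_topology N)"
  unfolding coarser_def openin_seminorm_topology openin_ext_norm_topology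
proof (intro allI impI ballI)
  fix U x assume U: "\<forall>x\<in>U. \<exists>F e. finite F \<and> F \<subseteq> {p} \<and> e > 0 \<and> {y. \<forall>q\<in>F. q (y - x) < e} \<subseteq> U"
    and "x \<in> U"
  then obtain F e where F: "F \<subseteq> {p}" "e > 0" "{y. \<forall>q\<in>F. q (y - x) < e} \<subseteq> U" by meson
  have "{y. N (y - x) < ennreal (e / 2 * r)} \<subseteq> U"
  proof
    fix y assume "y \<in> {y. N (y - x) < ennreal (e / 2 * r)}"
    then have "p (y - x) \<le> e / 2"
      using seminorm_le_if_ext_norm_less[OF assms(1,3), of "e / 2" "y - x"] F(2) by simp
    then show "y \<in> U" using F by fastforce
  qed
  then show "\<exists>e'>0. {y. N (y - x) < ennreal e'} \<subseteq> U"
    using F(2) assms(2) by (intro exI[of _ "e / 2 * r"]) simp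
qed

lemma absolutely_convex_contains_centred_ball:
  assumes "absolutely_convex scale A" "{y. N (y - x0) < ennreal e} \<subseteq> A"
  shows "{v. N v < ennreal e} \<subseteq> A"
proof
  fix v assume "v \<in> {v. N v < ennreal e}"
  then have "x0 + v \<in> A" "x0 - v \<in> A" using assms(2) by auto
  moreover have "norm (1/2 :: 'k) + norm (- 1/2 :: 'k) \<le> 1" by (simp add: norm_divide)
  ultimately have "scale (1/2) (x0 + v) + scale (- 1/2) (x0 - v) \<in> A"
    using assms(1) unfolding absolutely_convex_def by blast
  moreover have "scale (1/2) (x0 + v) + scale (- 1/2) (x0 - v) = v"
    by (simp add: scale_right_distrib scale_right_diff_distrib scale_minus_left flip: scale_left_distrib)
  ultimately show "v \<in> A" by simp
qed

end

locale ext_banach_space =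
  vector_space_over_normed_field scale for scale :: "'k::real_normed_field \<Rightarrow> 'v::ab_group_add \<Rightarrow> 'v" +
  fixes N :: "'v \<Rightarrow> ennreal"
  assumes ext_banach: "ext_banach scale N"

sublocale ext_banach_space \<subseteq> ext_normed_space
  using ext_banach unfolding ext_banach_def by unfold_locales blast

context ext_banach_space
begin

lemma mcomplete_ext_norm_dist: "capped.mcomplete"
  unfolding capped.mcomplete_def capped.MCauchy_def capped.limit_metric_sequentially
proof (intro allI impI)
  fix s :: "nat \<Rightarrow> 'v"
  assume "range s \<subseteq> UNIV \<and> (\<forall>\<epsilon>>0. \<exists>M. \<forall>n n'. M \<le> n \<longrightarrow> M \<le> n' \<longrightarrow> ext_norm_dist (s n) (s n') < \<epsilon>)"
  then have dist_cauchy: "\<exists>M. \<forall>n n'. M \<le> n \<longrightarrow> M \<le> n' \<longrightarrow> ext_norm_dist (s n) (s n') < \<epsilon>"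
    if "\<epsilon> > 0" for \<epsilon>
    using that by blast
  have "\<exists>M. \<forall>m\<ge>M. \<forall>n\<ge>M. N (s m - s n) < ennreal e" if "e > 0" for e
  proof -
    have "min e 1 > 0" using that by simp
    then obtain M where M: "\<forall>n n'. M \<le> n \<longrightarrow> M \<le> n' \<longrightarrow> ext_norm_dist (s n) (s n') < min e 1"
      using dist_cauchy by blast
    have "N (s m - s n) < ennreal e" if "m \<ge> M" "n \<ge> M" for m n
    proof -
      have "N (s m - s n) < ennreal (min e 1)"
        using M that ext_norm_dist_less_iff_small[of "min e 1"] by simp
      also have "\<dots> \<le> ennreal e" by (rule ennreal_leI) simp
      finally show ?thesis .
    qed
    then show ?thesis by blast
  qed
  then obtain x where "\<forall>e>0. \<exists>M. \<forall>n\<ge>M. N (s n - x) < ennreal e"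
    using ext_banach unfolding ext_banach_def by blast
  then have "\<forall>e>0. \<exists>M. \<forall>n\<ge>M. ext_norm_dist (s n) x < e"
    by (meson ext_norm_dist_less)
  then show "\<exists>l. l \<in> UNIV \<and> (\<forall>\<epsilon>>0. \<exists>M. \<forall>n\<ge>M. s n \<in> UNIV \<and> ext_norm_dist (s n) l < \<epsilon>)"
    by blast
qed

lemma completely_metrizable_ext_norm_topology: "completely_metrizable_space (ext_norm_topology N)"
  unfolding completely_metrizable_space_def
  by (intro exI[of _ UNIV] exI[of _ ext_norm_dist] conjI capped.Metric_space_axioms
      mcomplete_ext_norm_dist mtopology_ext_norm_dist[symmetric])

lemma barrel_contains_ball:
  assumes convex: "absolutely_convex scale B" and absorbing: "absorbing scale B"
    and closed: "closedin (ext_norm_topology N) B"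
  shows "\<exists>r>0. {x. N x < ennreal r} \<subseteq> B"
proof -
  define C where "C n = {x. scale (inverse (of_nat (Suc n))) x \<in> B}" for n
  have "\<exists>n. ext_norm_topology N interior_of C n \<noteq> {}"
  proof (rule ccontr)
    assume "\<nexists>n. ext_norm_topology N interior_of C n \<noteq> {}"
    moreover have "closedin (ext_norm_topology N) (C n)" for n
      using closedin_continuous_map_preimage[OF continuous_map_scale closed] by (simp add: C_def)
    ultimately have "ext_norm_topology N interior_of \<Union>(range C) = {}"
      using Baire_category_alt[OF disjI1[OF completely_metrizable_ext_norm_topology], of "range C"]
      by auto
    then show False
      using absorbing_covers[OF absorbing] interior_of_topspace[of "ext_norm_topology N"]
      by (simp add: C_def)
  qed
  then obtain n x0 where "x0 \<in> ext_norm_topology N interior_of C n" by blast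
  then obtain e where e: "e > 0" "{y. N (y - x0) < ennreal e} \<subseteq> C n"
    using openin_interior_of[of "ext_norm_topology N" "C n"] interior_of_subset[of _ "C n"]
    unfolding openin_ext_norm_topology by blast
  define c :: 'k where "c = inverse (of_nat (Suc n))"
  have "c \<noteq> 0" unfolding c_def by (simp only: inverse_nonzero_iff_nonzero of_nat_eq_0_iff)
  have ball: "{v. N v < ennreal e} \<subseteq> {x. scale c x \<in> B}"
    using absolutely_convex_contains_centred_ball[OF absolutely_convex_scale_preimage[OF convex] e(2)[unfolded C_def]]
    unfolding c_def .
  show ?thesis
  proof (intro exI conjI subsetI)
    show "norm c * e > 0" using \<open>c \<noteq> 0\<close> e(1) by simp
    fix w assume "w \<in> {x. N x < ennreal (norm c * e)}"
    moreover have "w = scale c (scale (inverse c) w)" using \<open>c \<noteq> 0\<close> by simp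
    ultimately have "N (scale (inverse c) w) < ennreal e"
      using ext_norm_scale_less_iff[OF \<open>c \<noteq> 0\<close>, of "scale (inverse c) w" e] by simp
    with ball \<open>c \<noteq> 0\<close> show "w \<in> B" by auto
  qed
qed

lemma barreled_finest_lc_topology:
  assumes finest: "finest_lc_topology scale N T"
  shows "barreled scale T"
  unfolding barreled_def
proof (intro allI impI)
  fix B assume B: "absolutely_convex scale B \<and> absorbing scale B \<and> closedin T B"
  let ?p = "minkowski_functional scale B"
  obtain P where T: "T = seminorm_topology P"
    using finest unfolding finest_lc_topology_def locally_convex_topology_def by blast
  have "closedin (ext_norm_topology N) B"
    using B finest unfolding finest_lc_topology_def T
    by (auto intro: closedin_coarser[of "seminorm_topology P"])
  then obtain r where r: "r > 0" "{x. N x < ennreal r} \<subseteq> B"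
    using barrel_contains_ball B by blast
  have p: "seminorm_on scale ?p" using seminorm_on_minkowski_functional B by blast
  have "coarser (seminorm_topology {?p}) (ext_norm_topology N)"
    using coarser_seminorm_topology_ext_norm_topology[OF p r(1)] minkowski_functional_le_1 B r(2)
    by blast
  moreover have "locally_convex_topology scale (seminorm_topology {?p})"
    unfolding locally_convex_topology_def using p by blast
  ultimately have "coarser (seminorm_topology {?p}) T"
    using finest unfolding finest_lc_topology_def by blast
  then have "openin T {x. ?p x < 1}"
    using openin_seminorm_topology_unit_ball[OF p] unfolding coarser_def by blast
  moreover have "0 \<in> {x. ?p x < 1}" using minkowski_functional_zero B by simp
  moreover have "{x. ?p x < 1} \<subseteq> B" using mem_of_minkowski_functional_less_1 B by blast
  ultimately show "\<exists>U. openin T U \<and> 0 \<in> U \<and> U \<subseteq> B" by blast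
qed

end

theorem theorem5p18:
  fixes scR :: "real \<Rightarrow> 'a::ab_group_add \<Rightarrow> 'a" and N :: "'a \<Rightarrow> ennreal" and T :: "'a topology"
    and scC :: "complex \<Rightarrow> 'b::ab_group_add \<Rightarrow> 'b" and M :: "'b \<Rightarrow> ennreal" and S :: "'b topology"
  shows "(vector_space scR \<and> ext_banach scR N \<and> finest_lc_topology scR N T \<longrightarrow> barreled scR T) \<and>
         (vector_space scC \<and> ext_banach scC M \<and> finest_lc_topology scC M S \<longrightarrow> barreled scC S)"
  using ext_banach_space.barreled_finest_lc_topology[of scR N T]
    ext_banach_space.barreled_finest_lc_topology[of scC M S]
  by (simp add: ext_banach_space_def ext_banach_space_axioms_def vector_space_over_normed_field_def)

end
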